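(* Let $n$ be a power of $2$, $\theta\in\mathbb{R}^{n\times n}$ and $\epsilon>0$. There is a universal constant $C>0$ such that the partition produced by the $(\mathrm{TV},\epsilon)$ division scheme satisfies $$|P_{\theta,\epsilon}| \leq 1 + C\,\mathrm{TV}(\theta)\,\epsilon^{-1}\log n,$$ and for every $V>0$, $$\log|\mathcal{P}(V,n,\epsilon)| \leq C\, V\epsilon^{-1}\log n.$$
   Context: $\mathrm{TV}(\theta) = \sum_{(u,v)\in E}|\theta_u-\theta_v|$ (unnormalized), $E$ being the edges of the grid graph on the index set of the matrix (pairs of entries at $\ell_1$-distance 1). The $(\mathrm{TV},\epsilon)$ scheme: start with the whole matrix; if its $\mathrm{TV}\le\epsilon$, stop; otherwise split it dyadically into four equal-size submatrices (top-left, top-right, bottom-left, bottom-right, each with half the rows and half the columns). At each subsequent round, every current submatrix with $\mathrm{TV} > \epsilon$ is split dyadically into four in the same way; repeat until every part has $\mathrm{TV}\le\epsilon$. The resulting partition of $[n]\times[n]$ into rectangular blocks is $P_{\theta,\epsilon}$, with $|P_{\theta,\epsilon}|$ its number of blocks. $\mathcal{P}(V,n,\epsilon) = \{P_{\theta,\epsilon}: \theta\in\mathbb{R}^{n\times n},\ \mathrm{TV}(\theta)\le V\}$. *)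

theory Defs
  imports Complex_Main
begin

(* A matrix theta in R^{n x n} is a function nat => nat => real, of which only the
   entries with indices in {0..<n} x {0..<n} matter. *)

(* Unnormalized total variation of theta restricted to an index set B:
   sum over grid edges (pairs of entries of B at l1-distance 1), each edge counted once. *)
definition TV_on :: "(nat \<Rightarrow> nat \<Rightarrow> real) \<Rightarrow> (nat \<times> nat) set \<Rightarrow> real" where
  "TV_on \<theta> B =
     (\<Sum>(i,j)\<in>B. if (i, Suc j) \<in> B then \<bar>\<theta> i j - \<theta> i (Suc j)\<bar> else 0)
   + (\<Sum>(i,j)\<in>B. if (Suc i, j) \<in> B then \<bar>\<theta> i j - \<theta> (Suc i) j\<bar> else 0)"

definition TV :: "(nat \<Rightarrow> nat \<Rightarrow> real) \<Rightarrow> nat \<Rightarrow> real" where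
  "TV \<theta> n = TV_on \<theta> ({0..<n} \<times> {0..<n})"

definition block :: "nat \<Rightarrow> nat \<Rightarrow> nat \<Rightarrow> (nat \<times> nat) set" where
  "block r c k = {r..<r + 2^k} \<times> {c..<c + 2^k}"

(* The (TV, eps) dyadic division scheme applied to block r c k:
   stop if its TV is <= eps, otherwise split into the four dyadic quadrants and recurse.
   (A 1x1 block has TV 0 <= eps when eps > 0, so the k = 0 case agrees with the scheme.) *)
primrec dyadic_part ::
  "(nat \<Rightarrow> nat \<Rightarrow> real) \<Rightarrow> real \<Rightarrow> nat \<Rightarrow> nat \<Rightarrow> nat \<Rightarrow> (nat \<times> nat) set set" where
  "dyadic_part \<theta> \<epsilon> r c 0 = {block r c 0}"
| "dyadic_part \<theta> \<epsilon> r c (Suc k) =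
     (if TV_on \<theta> (block r c (Suc k)) \<le> \<epsilon> then {block r c (Suc k)}
      else dyadic_part \<theta> \<epsilon> r c k \<union> dyadic_part \<theta> \<epsilon> r (c + 2^k) k
         \<union> dyadic_part \<theta> \<epsilon> (r + 2^k) c k \<union> dyadic_part \<theta> \<epsilon> (r + 2^k) (c + 2^k) k)"

definition P_part :: "(nat \<Rightarrow> nat \<Rightarrow> real) \<Rightarrow> real \<Rightarrow> nat \<Rightarrow> (nat \<times> nat) set set" where
  "P_part \<theta> \<epsilon> k = dyadic_part \<theta> \<epsilon> 0 0 k"

definition P_family :: "real \<Rightarrow> nat \<Rightarrow> real \<Rightarrow> (nat \<times> nat) set set set" where
  "P_family V k \<epsilon> = {P_part \<theta> \<epsilon> k | \<theta>. TV \<theta> (2^k) \<le> V}"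

end

theory Submission
  imports Defs "HOL-Analysis.Harmonic_Numbers"
begin

text \<open>Total variation is superadditive over the four quadrants of a block. Hence every split
  of a block, which happens only when its TV exceeds \<open>\<epsilon>\<close>, consumes more than \<open>\<epsilon>\<close> of a budget that
  is at most \<open>TV(\<theta>)\<close> on each of the \<open>log n\<close> levels, and adds three blocks; this gives the
  bound on \<open>|P\<^sub>\<theta>\<^sub>,\<^sub>\<epsilon>|\<close>. For the count of partitions, quantize the budget in units of \<open>\<epsilon>\<close>:
  a block of side \<open>2^(k+1)\<close> with budget below \<open>(j+1)\<epsilon>\<close> is either kept whole or split into
  quadrants whose quantized budgets add up to at most \<open>j\<close>. With \<open>N(k,j)\<close> the number of
  partitions obtainable this way, \<open>N(k+1,j) \<le> 1 + (j+1)^4 N(k,j)\<close>, whence \<open>N(k,j) \<le> 32^(k j)\<close>.\<close>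

definition edge_weight :: "(nat \<Rightarrow> nat \<Rightarrow> real) \<Rightarrow> (nat \<times> nat) set \<Rightarrow> nat \<times> nat \<Rightarrow> real" where
  "edge_weight \<theta> B x = (case x of (i, j) \<Rightarrow>
     (if (i, Suc j) \<in> B then \<bar>\<theta> i j - \<theta> i (Suc j)\<bar> else 0)
   + (if (Suc i, j) \<in> B then \<bar>\<theta> i j - \<theta> (Suc i) j\<bar> else 0))"

lemma TV_on_eq_sum_edge_weight: "TV_on \<theta> B = (\<Sum>x\<in>B. edge_weight \<theta> B x)"
  unfolding TV_on_def edge_weight_def by (simp add: sum.distrib[symmetric] case_prod_beta)

lemma edge_weight_nonneg: "edge_weight \<theta> B x \<ge> 0"
  unfolding edge_weight_def by (auto simp: case_prod_beta)

lemma edge_weight_mono: "A \<subseteq> B \<Longrightarrow> edge_weight \<theta> A x \<le> edge_weight \<theta> B x"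
  unfolding edge_weight_def by (auto simp: case_prod_beta intro!: add_mono)

lemma TV_on_nonneg: "TV_on \<theta> B \<ge> 0"
  unfolding TV_on_eq_sum_edge_weight by (simp add: sum_nonneg edge_weight_nonneg)

lemma TV_on_Un_ge:
  assumes "finite A" "finite B" "A \<inter> B = {}"
  shows "TV_on \<theta> A + TV_on \<theta> B \<le> TV_on \<theta> (A \<union> B)"
proof -
  let ?w = "edge_weight \<theta> (A \<union> B)"
  have "TV_on \<theta> A + TV_on \<theta> B \<le> sum ?w A + sum ?w B"
    unfolding TV_on_eq_sum_edge_weight by (intro add_mono sum_mono edge_weight_mono) auto
  also have "\<dots> = TV_on \<theta> (A \<union> B)"
    using assms by (simp add: TV_on_eq_sum_edge_weight sum.union_disjoint)
  finally show ?thesis .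
qed

lemma block_Suc_eq:
  "block r c (Suc k) = (block r c k \<union> block r (c + 2^k) k)
                     \<union> (block (r + 2^k) c k \<union> block (r + 2^k) (c + 2^k) k)"
  by (auto simp: block_def)

lemma TV_on_quadrants_le:
  "TV_on \<theta> (block r c k) + TV_on \<theta> (block r (c + 2^k) k) + TV_on \<theta> (block (r + 2^k) c k)
   + TV_on \<theta> (block (r + 2^k) (c + 2^k) k) \<le> TV_on \<theta> (block r c (Suc k))"
proof -
  have fin: "finite (block r c k)" for r c k by (simp add: block_def)
  have "TV_on \<theta> (block r c k) + TV_on \<theta> (block r (c + 2^k) k)
          \<le> TV_on \<theta> (block r c k \<union> block r (c + 2^k) k)"
    "TV_on \<theta> (block (r + 2^k) c k) + TV_on \<theta> (block (r + 2^k) (c + 2^k) k)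
          \<le> TV_on \<theta> (block (r + 2^k) c k \<union> block (r + 2^k) (c + 2^k) k)"
    "TV_on \<theta> (block r c k \<union> block r (c + 2^k) k)
       + TV_on \<theta> (block (r + 2^k) c k \<union> block (r + 2^k) (c + 2^k) k)
          \<le> TV_on \<theta> (block r c (Suc k))"
    unfolding block_Suc_eq by (intro TV_on_Un_ge; force simp: fin block_def)+
  then show ?thesis by linarith
qed

lemma card_Un4_le: "card (A \<union> B \<union> C \<union> D) \<le> card A + card B + card C + card D"
  using card_Un_le[of "A \<union> B \<union> C" D] card_Un_le[of "A \<union> B" C] card_Un_le[of A B] by linarith

lemma card_dyadic_part_le:
  assumes e: "\<epsilon> > 0"
  shows "real (card (dyadic_part \<theta> \<epsilon> r c k)) \<le> 1 + 3 * real k * TV_on \<theta> (block r c k) / \<epsilon>"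
proof (induction k arbitrary: r c)
  case 0
  then show ?case by simp
next
  case (Suc k)
  let ?T = "TV_on \<theta> (block r c (Suc k))"
  show ?case
  proof (cases "?T \<le> \<epsilon>")
    case True
    then show ?thesis using e TV_on_nonneg[of \<theta> "block r c (Suc k)"] by simp
  next
    case False
    let ?P = "\<lambda>r c. dyadic_part \<theta> \<epsilon> r c k" and ?t = "\<lambda>r c. TV_on \<theta> (block r c k)"
    have "card (dyadic_part \<theta> \<epsilon> r c (Suc k))
        \<le> card (?P r c) + card (?P r (c + 2^k)) + card (?P (r + 2^k) c) + card (?P (r + 2^k) (c + 2^k))"
      using False card_Un4_le by simp
    then have "real (card (dyadic_part \<theta> \<epsilon> r c (Suc k)))
        \<le> 4 + 3 * real k * (?t r c + ?t r (c + 2^k) + ?t (r + 2^k) c + ?t (r + 2^k) (c + 2^k)) / \<epsilon>"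
      using Suc.IH[of r c] Suc.IH[of r "c + 2^k"] Suc.IH[of "r + 2^k" c] Suc.IH[of "r + 2^k" "c + 2^k"]
      by (simp add: add_divide_distrib distrib_left)
    also have "\<dots> \<le> 4 + 3 * real k * ?T / \<epsilon>"
      using TV_on_quadrants_le[of \<theta> r c k] e
      by (intro add_left_mono divide_right_mono mult_left_mono) auto
    also have "\<dots> \<le> 1 + 3 * real (Suc k) * ?T / \<epsilon>"
    proof -
      have "3 < 3 * ?T / \<epsilon>" using False e by (simp add: field_simps)
      then show ?thesis by (simp add: distrib_left distrib_right add_divide_distrib)
    qed
    finally show ?thesis .
  qed
qed

definition dyadic_parts_below :: "real \<Rightarrow> nat \<Rightarrow> nat \<Rightarrow> nat \<Rightarrow> nat \<Rightarrow> (nat \<times> nat) set set set" where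
  "dyadic_parts_below \<epsilon> r c k j =
     {dyadic_part \<theta> \<epsilon> r c k | \<theta>. TV_on \<theta> (block r c k) < (real j + 1) * \<epsilon>}"

lemma nat_floor_divide_le:
  assumes "t \<ge> 0" "\<epsilon> > 0"
  shows "real (nat \<lfloor>t / \<epsilon>\<rfloor>) \<le> t / \<epsilon>"
  using assms by simp

lemma less_nat_floor_divide_Suc_mult:
  assumes "t \<ge> 0" "\<epsilon> > 0"
  shows "t < (real (nat \<lfloor>t / \<epsilon>\<rfloor>) + 1) * \<epsilon>"
proof -
  have "t / \<epsilon> < real (nat \<lfloor>t / \<epsilon>\<rfloor>) + 1" using assms by simp
  then show ?thesis using assms by (simp add: field_simps)
qed

lemma dyadic_part_mem_parts_below:
  assumes "\<epsilon> > 0"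
  shows "dyadic_part \<theta> \<epsilon> r c k \<in> dyadic_parts_below \<epsilon> r c k (nat \<lfloor>TV_on \<theta> (block r c k) / \<epsilon>\<rfloor>)"
  unfolding dyadic_parts_below_def
  using less_nat_floor_divide_Suc_mult[OF TV_on_nonneg assms] by blast

definition budget_splits :: "nat \<Rightarrow> (nat \<times> nat \<times> nat \<times> nat) set" where
  "budget_splits j = {(a, b, c, d). a + b + c + d \<le> j}"

lemma finite_budget_splits: "finite (budget_splits j)"
  and card_budget_splits_le: "card (budget_splits j) \<le> (j + 1)^4"
proof -
  have sub: "budget_splits j \<subseteq> {0..j} \<times> {0..j} \<times> {0..j} \<times> {0..j}"
    by (auto simp: budget_splits_def)
  then show "finite (budget_splits j)" by (rule finite_subset) simp
  have "card (budget_splits j) \<le> card ({0..j} \<times> {0..j} \<times> {0..j} \<times> {0..j})"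
    using sub by (intro card_mono) auto
  then show "card (budget_splits j) \<le> (j + 1)^4"
    by (simp only: card_cartesian_product card_atLeastAtMost power4_eq_xxxx Suc_diff_le diff_zero Suc_eq_plus1)
qed

lemma dyadic_parts_below_Suc_subset:
  assumes e: "\<epsilon> > 0"
  shows "dyadic_parts_below \<epsilon> r c (Suc k) j \<subseteq> insert {block r c (Suc k)}
    ((\<lambda>(P\<^sub>1, P\<^sub>2, P\<^sub>3, P\<^sub>4). P\<^sub>1 \<union> P\<^sub>2 \<union> P\<^sub>3 \<union> P\<^sub>4) ` (\<Union>(a, b, c', d) \<in> budget_splits j.
       dyadic_parts_below \<epsilon> r c k a \<times> dyadic_parts_below \<epsilon> r (c + 2^k) k b
     \<times> dyadic_parts_below \<epsilon> (r + 2^k) c k c' \<times> dyadic_parts_below \<epsilon> (r + 2^k) (c + 2^k) k d))"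
    (is "_ \<subseteq> insert _ (?union ` ?S)")
proof
  fix P assume "P \<in> dyadic_parts_below \<epsilon> r c (Suc k) j"
  then obtain \<theta> where P: "P = dyadic_part \<theta> \<epsilon> r c (Suc k)"
    and tv: "TV_on \<theta> (block r c (Suc k)) < (real j + 1) * \<epsilon>"
    unfolding dyadic_parts_below_def by auto
  show "P \<in> insert {block r c (Suc k)} (?union ` ?S)"
  proof (cases "TV_on \<theta> (block r c (Suc k)) \<le> \<epsilon>")
    case True
    then show ?thesis using P by simp
  next
    case False
    let ?t = "\<lambda>r c. TV_on \<theta> (block r c k)"
    let ?a = "\<lambda>r c. nat \<lfloor>?t r c / \<epsilon>\<rfloor>"
    have "real (?a r c + ?a r (c + 2^k) + ?a (r + 2^k) c + ?a (r + 2^k) (c + 2^k))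
        \<le> (?t r c + ?t r (c + 2^k) + ?t (r + 2^k) c + ?t (r + 2^k) (c + 2^k)) / \<epsilon>"
      using nat_floor_divide_le[OF TV_on_nonneg e] by (simp add: add_divide_distrib add_mono)
    also have "\<dots> \<le> TV_on \<theta> (block r c (Suc k)) / \<epsilon>"
      using TV_on_quadrants_le e by (simp add: divide_right_mono)
    also have "\<dots> < real j + 1" using tv e by (simp add: field_simps)
    finally have "(?a r c, ?a r (c + 2^k), ?a (r + 2^k) c, ?a (r + 2^k) (c + 2^k)) \<in> budget_splits j"
      by (simp add: budget_splits_def)
    then have "(dyadic_part \<theta> \<epsilon> r c k, dyadic_part \<theta> \<epsilon> r (c + 2^k) k,
                dyadic_part \<theta> \<epsilon> (r + 2^k) c k, dyadic_part \<theta> \<epsilon> (r + 2^k) (c + 2^k) k) \<in> ?S"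
      using dyadic_part_mem_parts_below[OF e] by blast
    moreover have "P = ?union (dyadic_part \<theta> \<epsilon> r c k, dyadic_part \<theta> \<epsilon> r (c + 2^k) k,
                dyadic_part \<theta> \<epsilon> (r + 2^k) c k, dyadic_part \<theta> \<epsilon> (r + 2^k) (c + 2^k) k)"
      using P False by simp
    ultimately show ?thesis by blast
  qed
qed

lemma one_plus_Suc_pow4_le: "(j::nat) \<ge> 1 \<Longrightarrow> 1 + (j + 1)^4 \<le> 32^j"
proof (induction j rule: dec_induct)
  case base
  then show ?case by (simp add: eval_nat_numeral)
next
  case (step j)
  have "(Suc j + 1)^4 \<le> (2 * (j + 1))^4" by (intro power_mono) auto
  also have "\<dots> = 2^4 * (j + 1)^4" by (rule power_mult_distrib)
  finally show ?case using step.IH by simp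
qed

lemma finite_card_dyadic_parts_below:
  assumes e: "\<epsilon> > 0"
  shows "finite (dyadic_parts_below \<epsilon> r c k j) \<and> card (dyadic_parts_below \<epsilon> r c k j) \<le> 32^(k * j)"
proof (induction k arbitrary: r c j)
  case 0
  have "dyadic_parts_below \<epsilon> r c 0 j \<subseteq> {{block r c 0}}" by (auto simp: dyadic_parts_below_def)
  then show ?case by (auto dest: subset_singletonD)
next
  case (Suc k)
  let ?G = "dyadic_parts_below \<epsilon>"
  let ?Q = "\<lambda>(a, b, c', d). ?G r c k a \<times> ?G r (c + 2^k) k b \<times> ?G (r + 2^k) c k c' \<times> ?G (r + 2^k) (c + 2^k) k d"
  let ?U = "(\<lambda>(P\<^sub>1, P\<^sub>2, P\<^sub>3, P\<^sub>4). P\<^sub>1 \<union> P\<^sub>2 \<union> P\<^sub>3 \<union> (P\<^sub>4 :: (nat \<times> nat) set set)) ` (\<Union>x \<in> budget_splits j. ?Q x)"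
  have Q: "finite (?Q x) \<and> card (?Q x) \<le> 32^(k * j)" if "x \<in> budget_splits j" for x
  proof -
    obtain a b c' d where x: "x = (a, b, c', d)" by (cases x)
    have IH: "card (?G r c k j) \<le> 32^(k * j)" for r c j using Suc.IH by blast
    have "card (?Q x) \<le> 32^(k * a) * (32^(k * b) * (32^(k * c') * 32^(k * d)))"
      unfolding x by (simp only: card_cartesian_product prod.case) (intro mult_le_mono IH)
    also have "\<dots> = 32^(k * (a + b + c' + d))" by (simp only: power_add distrib_left mult.assoc)
    also have "\<dots> \<le> 32^(k * j)" using that x by (intro power_increasing) (auto simp: budget_splits_def)
    finally show ?thesis unfolding x using Suc.IH by simp
  qed
  have finU: "finite ?U" using finite_budget_splits Q by blast
  have "card ?U \<le> card (\<Union>x \<in> budget_splits j. ?Q x)"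
    by (rule card_image_le) (use finite_budget_splits Q in blast)
  also have "\<dots> \<le> (\<Sum>x \<in> budget_splits j. card (?Q x))"
    by (rule card_UN_le[OF finite_budget_splits])
  also have "\<dots> \<le> card (budget_splits j) * 32^(k * j)"
    using Q sum_bounded_above[of "budget_splits j" "\<lambda>x. card (?Q x)"] by auto
  also have "\<dots> \<le> (j + 1)^4 * 32^(k * j)"
    using card_budget_splits_le by simp
  finally have cardU: "card ?U \<le> (j + 1)^4 * 32^(k * j)" .
  note sub = dyadic_parts_below_Suc_subset[OF e, of r c k j]
  have "card (?G r c (Suc k) j) \<le> 32^(Suc k * j)"
  proof (cases "j = 0")
    case True
    have "?G r c (Suc k) j \<subseteq> {{block r c (Suc k)}}"
      using True by (auto simp: dyadic_parts_below_def)
    then show ?thesis using True by (auto dest: subset_singletonD)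
  next
    case False
    have "card (?G r c (Suc k) j) \<le> card (insert {block r c (Suc k)} ?U)"
      using sub finU by (intro card_mono) auto
    also have "\<dots> \<le> 1 + card ?U" by (simp add: card_insert_if finU)
    also have "\<dots> \<le> 32^(k * j) + (j + 1)^4 * 32^(k * j)" by (rule add_mono[OF one_le_power cardU]) simp
    also have "\<dots> = (1 + (j + 1)^4) * 32^(k * j)" by (simp only: distrib_right mult_1)
    also have "\<dots> \<le> 32^j * 32^(k * j)"
      using one_plus_Suc_pow4_le[of j] False by (intro mult_right_mono) simp_all
    finally show ?thesis by (simp add: power_add[symmetric])
  qed
  then show ?case using sub finU finite_subset by blast
qed

lemma card_P_part_le:
  assumes "\<epsilon> > 0"
  shows "real (card (P_part \<theta> \<epsilon> k)) \<le> 1 + 5 * TV \<theta> (2^k) / \<epsilon> * ln (2^k)"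
proof -
  have TV: "TV \<theta> (2^k) = TV_on \<theta> (block 0 0 k)" by (simp add: TV_def block_def)
  have "3 * real k \<le> 5 * ln (2^k)"
    using ln2_ge_two_thirds mult_left_mono[of 3 "5 * ln 2" "real k"] by (simp add: ln_realpow)
  moreover have "TV \<theta> (2^k) / \<epsilon> \<ge> 0" using assms TV TV_on_nonneg by simp
  ultimately have "3 * real k * (TV \<theta> (2^k) / \<epsilon>) \<le> 5 * ln (2^k) * (TV \<theta> (2^k) / \<epsilon>)"
    by (rule mult_right_mono)
  then show ?thesis
    using card_dyadic_part_le[OF assms, of \<theta> 0 0 k] TV unfolding P_part_def by (simp add: mult_ac)
qed

lemma ln_card_P_family_le:
  assumes e: "\<epsilon> > 0" and V: "V > 0"
  shows "ln (real (card (P_family V k \<epsilon>))) \<le> 5 * V / \<epsilon> * ln (2^k)"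
proof -
  define j where "j = nat \<lfloor>V / \<epsilon>\<rfloor>"
  have sub: "P_family V k \<epsilon> \<subseteq> dyadic_parts_below \<epsilon> 0 0 k j"
    using less_nat_floor_divide_Suc_mult[of V \<epsilon>] e V
    unfolding P_family_def dyadic_parts_below_def P_part_def TV_def block_def j_def by force
  note G = finite_card_dyadic_parts_below[OF e, of 0 0 k j]
  have "TV (\<lambda>_ _. 0) (2^k) = 0" by (simp add: TV_def TV_on_def cong: if_cong)
  then have "P_part (\<lambda>_ _. 0) \<epsilon> k \<in> P_family V k \<epsilon>" unfolding P_family_def using V by force
  then have pos: "card (P_family V k \<epsilon>) > 0" using G sub by (metis card_gt_0_iff empty_iff finite_subset)
  have "card (P_family V k \<epsilon>) \<le> 2^(5 * k * j)"
    using G card_mono[OF _ sub] by (simp add: power_mult)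
  then have "real (card (P_family V k \<epsilon>)) \<le> 2^(5 * k * j)"
    by (metis of_nat_le_iff of_nat_numeral of_nat_power)
  then have "ln (real (card (P_family V k \<epsilon>))) \<le> ln (2^(5 * k * j))"
    using pos by simp
  also have "\<dots> = 5 * real j * ln (2^k)" by (simp add: ln_realpow)
  also have "\<dots> \<le> 5 * (V / \<epsilon>) * ln (2^k)"
  proof -
    have "real j \<le> V / \<epsilon>" unfolding j_def by (rule nat_floor_divide_le) (use e V in auto)
    then show ?thesis by (intro mult_right_mono) simp_all
  qed
  finally show ?thesis by simp
qed

theorem lemma4p2:
  shows "\<exists>C>0. \<forall>(n::nat) (k::nat) (\<theta>::nat \<Rightarrow> nat \<Rightarrow> real) (\<epsilon>::real).
           n = 2^k \<and> \<epsilon> > 0 \<longrightarrow>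
             real (card (P_part \<theta> \<epsilon> k)) \<le> 1 + C * TV \<theta> n / \<epsilon> * ln (real n)
           \<and> (\<forall>V>0. ln (real (card (P_family V k \<epsilon>))) \<le> C * V / \<epsilon> * ln (real n))"
  using card_P_part_le ln_card_P_family_le by (intro exI[of _ 5]) auto

end
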